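(* There exists a finite graph (without loops or parallel edges) which is not the dual graph of any pure simplicial complex.
   Context: A simplicial complex is pure if all its inclusion-maximal faces (facets) have the same dimension. The dual graph of a pure simplicial complex $\Delta$ has a vertex for each facet of $\Delta$, and two facets are adjacent iff they share a face of dimension one less than that of the facets. *)

theory Defs
  imports Main
begin

definition simplicial_complex :: "'v set set \<Rightarrow> bool" where
  "simplicial_complex \<Delta> \<longleftrightarrow> (\<forall>F\<in>\<Delta>. finite F) \<and> (\<forall>F\<in>\<Delta>. \<forall>G. G \<subseteq> F \<longrightarrow> G \<in> \<Delta>)"

definition facets :: "'v set set \<Rightarrow> 'v set set" where
  "facets \<Delta> = {F \<in> \<Delta>. \<forall>G\<in>\<Delta>. F \<subseteq> G \<longrightarrow> G = F}"

definition pure :: "'v set set \<Rightarrow> bool" where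
  "pure \<Delta> \<longleftrightarrow> (\<forall>F\<in>facets \<Delta>. \<forall>G\<in>facets \<Delta>. card F = card G)"

text \<open>Adjacency in the dual graph: two distinct facets sharing a face of
  dimension one less than that of the facets (dimension = cardinality - 1).\<close>
definition dual_adj :: "'v set set \<Rightarrow> 'v set \<Rightarrow> 'v set \<Rightarrow> bool" where
  "dual_adj \<Delta> F G \<longleftrightarrow> F \<in> facets \<Delta> \<and> G \<in> facets \<Delta> \<and> F \<noteq> G \<and>
     (\<exists>H\<in>\<Delta>. H \<subseteq> F \<and> H \<subseteq> G \<and> card H + 1 = card F)"

definition simple_graph :: "'a set \<Rightarrow> ('a \<Rightarrow> 'a \<Rightarrow> bool) \<Rightarrow> bool" where
  "simple_graph V E \<longleftrightarrow> finite V \<and> (\<forall>x y. E x y \<longrightarrow> x \<in> V \<and> y \<in> V) \<and>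
     (\<forall>x y. E x y \<longrightarrow> E y x) \<and> (\<forall>x. \<not> E x x)"

definition is_dual_graph_of :: "'a set \<Rightarrow> ('a \<Rightarrow> 'a \<Rightarrow> bool) \<Rightarrow> 'v set set \<Rightarrow> bool" where
  "is_dual_graph_of V E \<Delta> \<longleftrightarrow> (\<exists>f. bij_betw f V (facets \<Delta>) \<and>
     (\<forall>x\<in>V. \<forall>y\<in>V. E x y \<longleftrightarrow> dual_adj \<Delta> (f x) (f y)))"

end

theory Submission
  imports Defs
begin

text \<open>Let \<open>F\<close> be a facet of a pure complex. Every facet adjacent to \<open>F\<close> has the form
  \<open>F - {a} \<union> {b}\<close>, and two such facets are adjacent iff they remove the same \<open>a\<close> or add the
  same \<open>b\<close>. So if a neighbour \<open>G\<close> of \<open>F\<close> is adjacent to three further neighbours of \<open>F\<close>,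
  by pigeonhole two of those share with \<open>G\<close>, hence with each other, the removed or the added
  vertex, and are therefore adjacent. Consequently the triangular book with three pages (an
  edge joined to three independent vertices) is not a dual graph.\<close>

lemma exchange_of_card_Int:
  assumes "finite F" "finite X" "card X = card F" "card (F \<inter> X) + 1 = card F"
  obtains a b where "a \<in> F" "b \<notin> F" "X = insert b (F - {a})"
proof -
  have "card (F - X) = 1" "card (X - F) = 1"
    using assms by (simp_all add: card_Diff_subset_Int Int_commute)
  then obtain a b where "F - X = {a}" "X - F = {b}" by (metis card_1_singletonE)
  then have "a \<in> F" "b \<notin> F" "X = insert b (F - {a})" by blast+
  then show thesis by (rule that)
qed

lemma card_Int_exchanges:
  assumes "finite F" "a \<in> F" "a' \<in> F" "b \<notin> F" "b' \<notin> F"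
    and "insert b (F - {a}) \<noteq> insert b' (F - {a'})"
  shows "card (insert b (F - {a}) \<inter> insert b' (F - {a'})) + 1 = card F \<longleftrightarrow> a = a' \<or> b = b'"
proof (cases "a = a'")
  case True
  then have "insert b (F - {a}) \<inter> insert b' (F - {a'}) = F - {a}"
    using assms(4-6) by auto
  moreover have "card F > 0" using assms(1,2) card_gt_0_iff by blast
  ultimately show ?thesis using True assms(1,2) by simp
next
  case False
  have F2: "card (F - {a} - {a'}) + 2 = card F"
    using assms(1-3) False
    by (metis Suc_eq_plus1 add_2_eq_Suc' card_Suc_Diff1 finite_Diff insert_Diff insert_iff)
  have "insert b (F - {a}) \<inter> insert b' (F - {a'}) =
          (if b = b' then insert b (F - {a} - {a'}) else F - {a} - {a'})"
    using assms(4,5) by auto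
  then show ?thesis using F2 False assms(1,4,5) by simp
qed

lemma dual_adj_facets:
  assumes "dual_adj \<Delta> X Y"
  shows "X \<in> facets \<Delta>" "Y \<in> facets \<Delta>" "X \<noteq> Y"
  using assms by (auto simp: dual_adj_def)

lemma finite_facet:
  assumes "simplicial_complex \<Delta>" "F \<in> facets \<Delta>"
  shows "finite F"
  using assms by (auto simp: simplicial_complex_def facets_def)

lemma dual_adj_iff_card_Int:
  assumes "simplicial_complex \<Delta>" "X \<in> facets \<Delta>" "Y \<in> facets \<Delta>" "card X = card Y" "X \<noteq> Y"
  shows "dual_adj \<Delta> X Y \<longleftrightarrow> card (X \<inter> Y) + 1 = card X"
proof -
  have "X \<in> \<Delta>" "Y \<in> \<Delta>" using assms(2,3) by (auto simp: facets_def)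
  then have "finite X" "finite Y" "X \<inter> Y \<in> \<Delta>"
    using assms(1) unfolding simplicial_complex_def by (blast, blast, blast)
  have "\<not> X \<subseteq> Y"
    using card_subset_eq[OF \<open>finite Y\<close> _ assms(4)] assms(5) by blast
  then have card_lt: "card (X \<inter> Y) < card X"
    using \<open>finite X\<close> by (intro psubset_card_mono) auto
  show ?thesis
  proof
    assume "dual_adj \<Delta> X Y"
    then obtain H where "H \<subseteq> X \<inter> Y" "card H + 1 = card X" by (auto simp: dual_adj_def)
    moreover have "card H \<le> card (X \<inter> Y)"
      using \<open>H \<subseteq> X \<inter> Y\<close> \<open>finite X\<close> by (simp add: card_mono)
    ultimately show "card (X \<inter> Y) + 1 = card X" using card_lt by linarith
  next
    assume "card (X \<inter> Y) + 1 = card X"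
    with assms(2,3,5) \<open>X \<inter> Y \<in> \<Delta>\<close> show "dual_adj \<Delta> X Y"
      unfolding dual_adj_def by (intro conjI bexI[of _ "X \<inter> Y"]) auto
  qed
qed

lemma dual_adj_exchange:
  assumes "simplicial_complex \<Delta>" "pure \<Delta>" "dual_adj \<Delta> F X"
  obtains a b where "a \<in> F" "b \<notin> F" "X = insert b (F - {a})"
proof -
  note facets = dual_adj_facets[OF assms(3)]
  have "card X = card F" using assms(2) facets unfolding pure_def by blast
  moreover from this have "card (F \<inter> X) + 1 = card F"
    using assms(3) dual_adj_iff_card_Int[OF assms(1) facets(1,2)] facets(3) by simp
  ultimately show thesis
    using exchange_of_card_Int[OF finite_facet[OF assms(1)] finite_facet[OF assms(1)]] facets(1,2) that
    by blast
qed

lemma dual_adj_exchanges_iff: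
  assumes "simplicial_complex \<Delta>" "finite F" "a \<in> F" "a' \<in> F" "b \<notin> F" "b' \<notin> F"
    and "insert b (F - {a}) \<in> facets \<Delta>" "insert b' (F - {a'}) \<in> facets \<Delta>"
    and "insert b (F - {a}) \<noteq> insert b' (F - {a'})"
  shows "dual_adj \<Delta> (insert b (F - {a})) (insert b' (F - {a'})) \<longleftrightarrow> a = a' \<or> b = b'"
proof -
  have card_exchange: "card (insert c (F - {d})) = card F" if "d \<in> F" "c \<notin> F" for c d
  proof -
    have "card F > 0" using that(1) assms(2) card_gt_0_iff by blast
    then show ?thesis using that assms(2) by simp
  qed
  show ?thesis
    using dual_adj_iff_card_Int[OF assms(1,7,8)] card_Int_exchanges[OF assms(2-6,9)]
      card_exchange assms(3-6,9) by simp
qed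

lemma dual_adj_common_neighbours:
  assumes "simplicial_complex \<Delta>" "pure \<Delta>"
    and "dual_adj \<Delta> F G" "dual_adj \<Delta> F G\<^sub>1" "dual_adj \<Delta> F G\<^sub>2" "dual_adj \<Delta> F G\<^sub>3"
    and "dual_adj \<Delta> G G\<^sub>1" "dual_adj \<Delta> G G\<^sub>2" "dual_adj \<Delta> G G\<^sub>3"
    and "G\<^sub>1 \<noteq> G\<^sub>2" "G\<^sub>1 \<noteq> G\<^sub>3" "G\<^sub>2 \<noteq> G\<^sub>3"
  shows "dual_adj \<Delta> G\<^sub>1 G\<^sub>2 \<or> dual_adj \<Delta> G\<^sub>1 G\<^sub>3 \<or> dual_adj \<Delta> G\<^sub>2 G\<^sub>3"
proof -
  have "finite F" using finite_facet[OF assms(1) dual_adj_facets(1)[OF assms(3)]] .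
  obtain a b where G: "a \<in> F" "b \<notin> F" "G = insert b (F - {a})"
    using dual_adj_exchange[OF assms(1,2,3)] .
  obtain a\<^sub>1 b\<^sub>1 where G\<^sub>1: "a\<^sub>1 \<in> F" "b\<^sub>1 \<notin> F" "G\<^sub>1 = insert b\<^sub>1 (F - {a\<^sub>1})"
    using dual_adj_exchange[OF assms(1,2,4)] .
  obtain a\<^sub>2 b\<^sub>2 where G\<^sub>2: "a\<^sub>2 \<in> F" "b\<^sub>2 \<notin> F" "G\<^sub>2 = insert b\<^sub>2 (F - {a\<^sub>2})"
    using dual_adj_exchange[OF assms(1,2,5)] .
  obtain a\<^sub>3 b\<^sub>3 where G\<^sub>3: "a\<^sub>3 \<in> F" "b\<^sub>3 \<notin> F" "G\<^sub>3 = insert b\<^sub>3 (F - {a\<^sub>3})"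
    using dual_adj_exchange[OF assms(1,2,6)] .
  have adj_iff: "dual_adj \<Delta> X Y \<longleftrightarrow> c = c' \<or> d = d'"
    if "X \<in> facets \<Delta>" "Y \<in> facets \<Delta>" "X \<noteq> Y"
      "c \<in> F" "d \<notin> F" "X = insert d (F - {c})" "c' \<in> F" "d' \<notin> F" "Y = insert d' (F - {c'})"
    for X Y c d c' d'
    using dual_adj_exchanges_iff[OF assms(1) \<open>finite F\<close> that(4,7,5,8)] that by simp
  have facets: "X \<in> facets \<Delta>" if "dual_adj \<Delta> F X" for X
    using dual_adj_facets(2)[OF that] .
  have "a = a\<^sub>1 \<or> b = b\<^sub>1" "a = a\<^sub>2 \<or> b = b\<^sub>2" "a = a\<^sub>3 \<or> b = b\<^sub>3"
    using adj_iff[OF facets[OF assms(3)] facets[OF assms(4)] _ G G\<^sub>1]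
      adj_iff[OF facets[OF assms(3)] facets[OF assms(5)] _ G G\<^sub>2]
      adj_iff[OF facets[OF assms(3)] facets[OF assms(6)] _ G G\<^sub>3]
      assms(7-9) dual_adj_facets(3) by blast+
  then show ?thesis
    using adj_iff[OF facets[OF assms(4)] facets[OF assms(5)] assms(10) G\<^sub>1 G\<^sub>2]
      adj_iff[OF facets[OF assms(4)] facets[OF assms(6)] assms(11) G\<^sub>1 G\<^sub>3]
      adj_iff[OF facets[OF assms(5)] facets[OF assms(6)] assms(12) G\<^sub>2 G\<^sub>3]
    by blast
qed

definition book_graph_adj :: "nat \<Rightarrow> nat \<Rightarrow> bool" where
  "book_graph_adj x y \<longleftrightarrow> x \<noteq> y \<and> x \<le> 4 \<and> y \<le> 4 \<and> (x \<le> 1 \<or> y \<le> 1)"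

lemma simple_graph_book_graph: "simple_graph {0..4} book_graph_adj"
  unfolding simple_graph_def book_graph_adj_def by auto

theorem corollary4p2:
  shows "\<exists>(V :: nat set) E. simple_graph V E \<and>
           \<not> (\<exists>\<Delta> :: nat set set. finite \<Delta> \<and> simplicial_complex \<Delta> \<and> pure \<Delta> \<and>
                  is_dual_graph_of V E \<Delta>)"
proof (intro exI conjI notI)
  show "simple_graph {0..4} book_graph_adj" by (rule simple_graph_book_graph)
next
  assume "\<exists>\<Delta> :: nat set set. finite \<Delta> \<and> simplicial_complex \<Delta> \<and> pure \<Delta> \<and>
            is_dual_graph_of {0..4} book_graph_adj \<Delta>"
  then obtain \<Delta> :: "nat set set" and f where "simplicial_complex \<Delta>" "pure \<Delta>"
    and f_inj: "inj_on f {0..4}"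
    and f_adj: "\<forall>x\<in>{0..4}. \<forall>y\<in>{0..4}. book_graph_adj x y \<longleftrightarrow> dual_adj \<Delta> (f x) (f y)"
    unfolding is_dual_graph_of_def bij_betw_def by blast
  have "dual_adj \<Delta> (f x) (f y)" if "x \<noteq> y" "x \<le> 1" "y \<le> 4" for x y
    using f_adj[rule_format, of x y] that by (simp add: book_graph_adj_def)
  moreover have "\<not> dual_adj \<Delta> (f x) (f y)" if "2 \<le> x" "x \<le> 4" "2 \<le> y" "y \<le> 4" for x y
    using f_adj[rule_format, of x y] that by (simp add: book_graph_adj_def)
  moreover have "f x \<noteq> f y" if "x \<noteq> y" "x \<le> 4" "y \<le> 4" for x y
    using f_inj that by (auto simp: inj_on_def)
  ultimately show False
    using dual_adj_common_neighbours[OF \<open>simplicial_complex \<Delta>\<close> \<open>pure \<Delta>\<close>,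
        of "f 0" "f 1" "f 2" "f 3" "f 4"]
    by simp
qed

end
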